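(* Let $\alpha>0$ be irrational and $A=\begin{bmatrix} m_1&n_1\\ m_2&n_2\end{bmatrix}\in GL(2,\mathbb Z)$. Then $\pi(A)$ restricts to an isometric automorphism of $\mathcal A_\alpha$ if and only if $m_1+\alpha n_1>0$ and $n_1\alpha^2+(m_1-n_2)\alpha-m_2=0$.
   Context: For $f\in C(\mathbb T^2)$ (with $\mathbb T$ the unit circle), the Fourier transform is $\hat f(m,n)=\int_{\mathbb T^2} f(e^{is},e^{it})e^{-i(ms+nt)}\,d\mu$, $\mu$ normalized Lebesgue measure. For a positive irrational $\alpha$, $\mathcal A_\alpha=\{f\in C(\mathbb T^2): \hat f(m,n)=0 \text{ whenever } m+\alpha n<0\}$, a uniform algebra with the sup norm on $\mathbb T^2$. For $A=\begin{bmatrix} a&b\\ c&d\end{bmatrix}\in GL(2,\mathbb Z)$, $\pi(A):C(\mathbb T^2)\to C(\mathbb T^2)$ is $\pi(A)(f)=f\circ\varphi$ with $\varphi(z,w)=(z^aw^b,z^cw^d)$. *)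

theory Defs
  imports "HOL-Analysis.Analysis"
begin

definition torus2 :: "(complex \<times> complex) set" where
  "torus2 = sphere 0 1 \<times> sphere 0 1"

text \<open>Elements of C(T^2): continuous complex functions on T^2
  (values off T^2 are irrelevant and are ignored everywhere below).\<close>
definition CT2 :: "(complex \<times> complex \<Rightarrow> complex) set" where
  "CT2 = {f. continuous_on torus2 f}"

definition fourier2 :: "(complex \<times> complex \<Rightarrow> complex) \<Rightarrow> int \<Rightarrow> int \<Rightarrow> complex" where
  "fourier2 f m n =
     integral (cbox (0,0) (2*pi, 2*pi))
       (\<lambda>(s,t). f (cis s, cis t) * cis (- (of_int m * s + of_int n * t)))
     / complex_of_real (4 * pi\<^sup>2)"

definition A_alpha :: "real \<Rightarrow> (complex \<times> complex \<Rightarrow> complex) set" where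
  "A_alpha \<alpha> = {f \<in> CT2. \<forall>m n. real_of_int m + \<alpha> * real_of_int n < 0 \<longrightarrow> fourier2 f m n = 0}"

definition phiA :: "int \<Rightarrow> int \<Rightarrow> int \<Rightarrow> int \<Rightarrow> complex \<times> complex \<Rightarrow> complex \<times> complex" where
  "phiA a b c d = (\<lambda>(z,w). (z powi a * w powi b, z powi c * w powi d))"

definition piA :: "int \<Rightarrow> int \<Rightarrow> int \<Rightarrow> int \<Rightarrow> (complex \<times> complex \<Rightarrow> complex) \<Rightarrow> (complex \<times> complex \<Rightarrow> complex)" where
  "piA a b c d f = f \<circ> phiA a b c d"

definition supnorm :: "(complex \<times> complex \<Rightarrow> complex) \<Rightarrow> real" where
  "supnorm f = (SUP p\<in>torus2. cmod (f p))"

definition restricts_isometric_automorphism ::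
  "int \<Rightarrow> int \<Rightarrow> int \<Rightarrow> int \<Rightarrow> real \<Rightarrow> bool" where
  "restricts_isometric_automorphism a b c d \<alpha> \<longleftrightarrow>
     (\<forall>f\<in>A_alpha \<alpha>. piA a b c d f \<in> A_alpha \<alpha>) \<and>
     (\<forall>f\<in>A_alpha \<alpha>. supnorm (piA a b c d f) = supnorm f) \<and>
     (\<forall>f\<in>A_alpha \<alpha>. \<forall>g\<in>A_alpha \<alpha>.
        (\<forall>p\<in>torus2. piA a b c d f p = piA a b c d g p) \<longrightarrow> (\<forall>p\<in>torus2. f p = g p)) \<and>
     (\<forall>g\<in>A_alpha \<alpha>. \<exists>f\<in>A_alpha \<alpha>. \<forall>p\<in>torus2. piA a b c d f p = g p)"

end

theory Submission
  imports Defs "HOL-Analysis.Kronecker_Approximation_Theorem"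
begin

text \<open>
  Composing with \<open>\<phi>\<close> moves Fourier coefficients along the dual action of \<open>A\<close>: the coefficient
  of \<open>f \<circ> \<phi>\<close> at \<open>(m,n)A\<close> is that of \<open>f\<close> at \<open>(m,n)\<close>, because a unimodular linear change of
  variables preserves the integral of a doubly \<open>2\<pi>\<close>-periodic function (reduce \<open>A\<close> to a
  triangular matrix by Euclid's algorithm). So \<open>\<pi>(A)\<close> preserves \<open>A\<^sub>\<alpha>\<close> iff \<open>(m,n) \<mapsto> (m,n)A\<close>
  maps the lattice points of the half-plane \<open>m + \<alpha>n \<ge> 0\<close> into itself; testing on the
  characters \<open>z\<^sup>pw\<^sup>q\<close> and using density of \<open>k\<alpha> mod 1\<close>, this means exactly that \<open>(1,\<alpha>)\<close> is an
  eigenvector of \<open>A\<close> with positive eigenvalue, which is the stated condition. Then \<open>A\<^sup>-\<^sup>1\<close> has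
  the same property, so \<open>\<pi>(A\<^sup>-\<^sup>1)\<close> inverts \<open>\<pi>(A)\<close> on \<open>A\<^sub>\<alpha>\<close>, and \<open>\<pi>(A)\<close> is isometric because
  \<open>\<phi>\<close> permutes the torus.
\<close>

section \<open>Integrals of periodic functions\<close>

lemma periodic_int_multiple:
  assumes "\<And>x. g (x + T) = g x"
  shows "g (x + of_int k * T) = g x"
proof (induction k rule: int_induct[where k=0])
  case (step1 i)
  have "x + of_int (i + 1) * T = (x + of_int i * T) + T" by (simp add: algebra_simps)
  then show ?case using step1 assms by metis
next
  case (step2 i)
  have "x + of_int i * T = (x + of_int (i - 1) * T) + T" by (simp add: algebra_simps)
  then show ?case using step2 assms by metis
qed simp

lemma integral_periodic_shift:
  fixes g :: "real \<Rightarrow> 'a::euclidean_space"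
  assumes cont: "continuous_on UNIV g" and per: "\<And>x. g (x + T) = g x" and "T > 0"
  shows "integral {0..T} (\<lambda>s. g (s + c)) = integral {0..T} g"
proof -
  define r where "r = c - of_int \<lfloor>c / T\<rfloor> * T"
  have r: "0 \<le> r" "r \<le> T"
    using \<open>T > 0\<close> floor_divide_lower[of T c] floor_divide_upper[of T c]
    unfolding r_def by (auto simp: algebra_simps)
  have int: "g integrable_on {a..b}" for a b
    by (rule integrable_continuous_real) (rule continuous_on_subset[OF cont], simp)
  have "(\<lambda>s. g (s + c)) = g \<circ> (+) r"
  proof
    fix s
    have "g (s + c) = g ((r + s) + of_int \<lfloor>c / T\<rfloor> * T)"
      by (rule arg_cong[where f = g]) (simp add: r_def)
    also have "\<dots> = g (r + s)" by (rule periodic_int_multiple[of g T, OF per])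
    finally show "g (s + c) = (g \<circ> (+) r) s" by simp
  qed
  then have "integral {0..T} (\<lambda>s. g (s + c)) = integral {r..T+r} g"
    by (simp add: integral_shift_Icc_real)
  also have "\<dots> = integral {r..T} g + integral {T..T+r} g"
    using Henstock_Kurzweil_Integration.integral_combine[of r T "T + r" g] r int by simp
  also have "integral {T..T+r} g = integral {0..r} (g \<circ> (+) T)"
    by (simp add: integral_shift_Icc_real add.commute)
  also have "g \<circ> (+) T = g"
    using per by (auto simp: add.commute)
  also have "integral {r..T} g + integral {0..r} g = integral {0..T} g"
    using Henstock_Kurzweil_Integration.integral_combine[of 0 r T g] r int by (simp add: add.commute)
  finally show ?thesis .
qed

lemma integral_periodic_reflect:
  fixes g :: "real \<Rightarrow> 'a::euclidean_space"
  assumes per: "\<And>x. g (x + T) = g x"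
  shows "integral {0..T} (\<lambda>s. g (- s)) = integral {0..T} g"
proof -
  have "integral {0..T} (\<lambda>s. g (- s)) = integral {-T..0} g"
    using Henstock_Kurzweil_Integration.integral_reflect_real[of 0 "-T" g] by simp
  also have "\<dots> = integral {0..T} (g \<circ> (+) (-T))"
    by (simp add: integral_shift_Icc_real)
  also have "g \<circ> (+) (-T) = g"
    using periodic_int_multiple[of g T "_" "-1", OF per] by (auto simp: add.commute)
  finally show ?thesis .
qed

lemma integral_periodic_affine:
  fixes g :: "real \<Rightarrow> 'a::euclidean_space"
  assumes cont: "continuous_on UNIV g" and per: "\<And>x. g (x + T) = g x" and "T > 0"
    and "\<bar>e\<bar> = 1"
  shows "integral {0..T} (\<lambda>s. g (e * s + c)) = integral {0..T} g"
proof -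
  have per_shift: "g ((x + T) + c) = g (x + c)" for x
    using per[of "x + c"] by (simp add: algebra_simps)
  consider "e = 1" | "e = -1" using \<open>\<bar>e\<bar> = 1\<close> by linarith
  then show ?thesis
  proof cases
    case 1
    then show ?thesis using integral_periodic_shift[OF cont per \<open>T > 0\<close>] by simp
  next
    case 2
    then have "integral {0..T} (\<lambda>s. g (e * s + c)) = integral {0..T} (\<lambda>s. g (- s + c))"
      by simp
    also have "\<dots> = integral {0..T} (\<lambda>s. g (s + c))"
      using integral_periodic_reflect[of "\<lambda>x. g (x + c)" T, OF per_shift] .
    also have "\<dots> = integral {0..T} g"
      using integral_periodic_shift[OF cont per \<open>T > 0\<close>] .
    finally show ?thesis .
  qed
qed

definition torus_periodic :: "(real \<times> real \<Rightarrow> 'a::topological_space) \<Rightarrow> bool" where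
  "torus_periodic G \<longleftrightarrow> continuous_on UNIV G \<and>
     (\<forall>x y. G (x + 2*pi, y) = G (x, y)) \<and> (\<forall>x y. G (x, y + 2*pi) = G (x, y))"

definition square_integral :: "(real \<times> real \<Rightarrow> 'a::euclidean_space) \<Rightarrow> 'a" where
  "square_integral G = integral (cbox (0, 0) (2*pi, 2*pi)) G"

definition lin_subst :: "int \<Rightarrow> int \<Rightarrow> int \<Rightarrow> int \<Rightarrow> (real \<times> real \<Rightarrow> 'a) \<Rightarrow> real \<times> real \<Rightarrow> 'a" where
  "lin_subst a b c d G = (\<lambda>p. G (of_int a * fst p + of_int b * snd p, of_int c * fst p + of_int d * snd p))"

lemma lin_subst_lin_subst:
  "lin_subst a b c d (lin_subst a' b' c' d' G) =
     lin_subst (a'*a + b'*c) (a'*b + b'*d) (c'*a + d'*c) (c'*b + d'*d) G"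
  unfolding lin_subst_def by (rule ext) (simp add: algebra_simps)

lemma continuous_on_lin_subst:
  "continuous_on UNIV G \<Longrightarrow> continuous_on UNIV (lin_subst a b c d G)"
  unfolding lin_subst_def
  by (rule continuous_on_compose2[of UNIV G]) (auto intro!: continuous_intros)

lemma torus_periodic_int_multiple:
  assumes "torus_periodic G"
  shows "G (x + of_int k * (2*pi), y + of_int l * (2*pi)) = G (x, y)"
proof -
  have "G (x + of_int k * (2*pi), y + of_int l * (2*pi)) = G (x + of_int k * (2*pi), y)"
    using periodic_int_multiple[of "\<lambda>y. G (x + of_int k * (2*pi), y)"] assms
    unfolding torus_periodic_def by blast
  also have "\<dots> = G (x, y)"
    using periodic_int_multiple[of "\<lambda>x. G (x, y)"] assms unfolding torus_periodic_def by blast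
  finally show ?thesis .
qed

lemma torus_periodic_lin_subst:
  assumes "torus_periodic G"
  shows "torus_periodic (lin_subst a b c d G)"
proof -
  have "lin_subst a b c d G (x + 2*pi, y) = lin_subst a b c d G (x, y)"
    and "lin_subst a b c d G (x, y + 2*pi) = lin_subst a b c d G (x, y)" for x y
    using torus_periodic_int_multiple[OF assms, of "of_int a * x + of_int b * y" a
        "of_int c * x + of_int d * y" c]
      torus_periodic_int_multiple[OF assms, of "of_int a * x + of_int b * y" b
        "of_int c * x + of_int d * y" d]
    unfolding lin_subst_def by (simp_all add: algebra_simps)
  with assms show ?thesis
    unfolding torus_periodic_def by (simp add: continuous_on_lin_subst)
qed

lemma square_integral_iterated:
  assumes "continuous_on UNIV G"
  shows "square_integral G = integral {0..2*pi} (\<lambda>x. integral {0..2*pi} (\<lambda>y. G (x, y)))"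
  using integral_prod_continuous[of 0 0 "2*pi" "2*pi" G] continuous_on_subset[OF assms]
  unfolding square_integral_def by simp

lemma square_integral_swap:
  assumes "continuous_on UNIV G"
  shows "square_integral (lin_subst 0 1 1 0 G) = square_integral G"
proof -
  have "integral (cbox (0,0) (2*pi,2*pi)) (\<lambda>(x,y). G (x,y)) =
        integral (cbox (0,0) (2*pi,2*pi)) (\<lambda>(x,y). G (y,x))"
    by (rule integral_swap_2dim[where f = "\<lambda>x y. G (x,y)"])
      (use assms in \<open>auto intro: continuous_on_subset\<close>)
  then show ?thesis
    unfolding square_integral_def lin_subst_def by (simp add: case_prod_beta')
qed

lemma square_integral_iterated':
  assumes "continuous_on UNIV G"
  shows "square_integral G = integral {0..2*pi} (\<lambda>y. integral {0..2*pi} (\<lambda>x. G (x, y)))"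
proof -
  have "square_integral G = square_integral (lin_subst 0 1 1 0 G)"
    using square_integral_swap[OF assms] by simp
  also have "\<dots> = integral {0..2*pi} (\<lambda>y. integral {0..2*pi} (\<lambda>x. G (x, y)))"
    using square_integral_iterated[OF continuous_on_lin_subst[OF assms, of 0 1 1 0]]
    by (simp add: lin_subst_def)
  finally show ?thesis .
qed

lemma square_integral_triangular:
  assumes G: "torus_periodic G" and "\<bar>a\<bar> = 1" "\<bar>d\<bar> = 1"
  shows "square_integral (lin_subst a b 0 d G) = square_integral G"
proof -
  have cont: "continuous_on UNIV G" using G by (simp add: torus_periodic_def)
  have cont_x: "continuous_on UNIV (\<lambda>x. G (x, y))" for y
    by (rule continuous_on_compose2[OF cont]) (auto intro!: continuous_intros)
  have cont_y: "continuous_on UNIV (\<lambda>y. G (x, y))" for x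
    by (rule continuous_on_compose2[OF cont]) (auto intro!: continuous_intros)
  have ad: "\<bar>real_of_int a\<bar> = 1" "\<bar>real_of_int d\<bar> = 1"
    using assms(2,3) by linarith+
  have "square_integral (lin_subst a b 0 d G) =
      integral {0..2*pi} (\<lambda>y. integral {0..2*pi} (\<lambda>x. G (of_int a * x + of_int b * y, of_int d * y)))"
    using square_integral_iterated'[OF continuous_on_lin_subst[OF cont, of a b 0 d]] by (simp add: lin_subst_def)
  also have "\<dots> = integral {0..2*pi} (\<lambda>y. integral {0..2*pi} (\<lambda>x. G (x, of_int d * y)))"
    using integral_periodic_affine[of "\<lambda>x. G (x, _)" "2*pi" "of_int a"] cont_x G ad(1)
    unfolding torus_periodic_def by simp
  also have "\<dots> = integral {0..2*pi} (\<lambda>x. integral {0..2*pi} (\<lambda>y. G (x, of_int d * y)))"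
    using square_integral_iterated[OF continuous_on_lin_subst[OF cont, of 1 0 0 d]]
      square_integral_iterated'[OF continuous_on_lin_subst[OF cont, of 1 0 0 d]]
    by (simp add: lin_subst_def)
  also have "\<dots> = integral {0..2*pi} (\<lambda>x. integral {0..2*pi} (\<lambda>y. G (x, y)))"
    using integral_periodic_affine[of "\<lambda>y. G (_, y)" "2*pi" "of_int d" 0] cont_y G ad(2)
    unfolding torus_periodic_def by simp
  also have "\<dots> = square_integral G"
    using square_integral_iterated[OF cont] by simp
  finally show ?thesis .
qed

lemma euclid_step_int:
  fixes a c :: int
  assumes "c \<noteq> 0" "\<bar>c\<bar> \<le> \<bar>a\<bar>"
  obtains e where "\<bar>e\<bar> = 1" "\<bar>a - e * c\<bar> < \<bar>a\<bar>"
proof (rule that)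
  show "\<bar>sgn a * sgn c\<bar> = 1" using assms by (auto simp: abs_mult)
  show "\<bar>a - sgn a * sgn c * c\<bar> < \<bar>a\<bar>"
    using assms by (cases a "0::int" rule: linorder_cases; cases c "0::int" rule: linorder_cases) auto
qed

lemma square_integral_unimodular:
  assumes "torus_periodic G" and "\<bar>a*d - b*c\<bar> = 1"
  shows "square_integral (lin_subst a b c d G) = square_integral G"
  using assms
proof (induction "nat (\<bar>a\<bar> + \<bar>c\<bar>)" arbitrary: a b c d G rule: less_induct)
  case less
  have swapped: "torus_periodic (lin_subst 0 1 1 0 G)" "square_integral (lin_subst 0 1 1 0 G) = square_integral G"
    using less.prems torus_periodic_lin_subst square_integral_swap
    unfolding torus_periodic_def by blast+
  have rows: "lin_subst a b c d G = lin_subst c d a b (lin_subst 0 1 1 0 G)"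
    by (simp add: lin_subst_lin_subst)
  have reduce: "square_integral (lin_subst a' b' c' d' H) = square_integral H"
    if H: "torus_periodic H" and det: "\<bar>a'*d' - b'*c'\<bar> = 1"
      and smaller: "c' \<noteq> 0" "\<bar>c'\<bar> \<le> \<bar>a'\<bar>"
      and size: "\<bar>a'\<bar> + \<bar>c'\<bar> = \<bar>a\<bar> + \<bar>c\<bar>"
      for a' b' c' d' and H :: "real \<times> real \<Rightarrow> 'a"
  proof -
    obtain e where e: "\<bar>e\<bar> = 1" "\<bar>a' - e * c'\<bar> < \<bar>a'\<bar>"
      using euclid_step_int[OF smaller] .
    define H1 where "H1 = lin_subst 1 e 0 1 H"
    have H1: "torus_periodic H1" unfolding H1_def using torus_periodic_lin_subst[OF H] .
    have shear: "lin_subst a' b' c' d' H = lin_subst (a' - e * c') (b' - e * d') c' d' H1"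
      unfolding H1_def lin_subst_lin_subst by (simp add: algebra_simps)
    have "nat (\<bar>a' - e * c'\<bar> + \<bar>c'\<bar>) < nat (\<bar>a\<bar> + \<bar>c\<bar>)"
      using e(2) size abs_ge_zero[of "a' - e * c'"] unfolding zless_nat_conj by linarith
    then have "square_integral (lin_subst (a' - e * c') (b' - e * d') c' d' H1) = square_integral H1"
      using det H1 by (intro less.hyps) (simp_all add: algebra_simps)
    also have "\<dots> = square_integral H"
      unfolding H1_def using square_integral_triangular[OF H] e by simp
    finally show ?thesis unfolding shear .
  qed
  consider "c = 0" | "a = 0" | "c \<noteq> 0" "\<bar>c\<bar> \<le> \<bar>a\<bar>" | "a \<noteq> 0" "\<bar>a\<bar> \<le> \<bar>c\<bar>"
    by linarith
  then show ?case
  proof cases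
    case 1
    then have "\<bar>a\<bar> = 1" "\<bar>d\<bar> = 1"
      using less.prems(2) by (auto simp: abs_mult zmult_eq_1_iff)
    then show ?thesis using square_integral_triangular[OF less.prems(1)] 1 by simp
  next
    case 2
    then have "\<bar>c\<bar> = 1" "\<bar>b\<bar> = 1"
      using less.prems(2) by (auto simp: abs_mult zmult_eq_1_iff)
    then show ?thesis using square_integral_triangular[OF swapped(1)] swapped(2) 2 rows by simp
  next
    case 3
    then show ?thesis using reduce[OF less.prems] by simp
  next
    case 4
    have "\<bar>c*b - d*a\<bar> = 1" using less.prems(2) by (simp add: abs_minus_commute mult.commute)
    then show ?thesis using reduce[OF swapped(1) _ 4] swapped(2) rows by simp
  qed
qed

section \<open>The torus, the maps \<open>\<phi>\<close> and Fourier coefficients\<close>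

lemma in_torus2_iff_cis: "p \<in> torus2 \<longleftrightarrow> (\<exists>s t. p = (cis s, cis t))"
proof
  assume "p \<in> torus2"
  then have "cmod (fst p) = 1" "cmod (snd p) = 1"
    unfolding torus2_def by (auto simp: mem_Times_iff)
  then have "fst p = cis (Arg (fst p))" "snd p = cis (Arg (snd p))"
    using complex_norm_eq_1_exp_eq by (auto simp: cis_conv_exp)
  then show "\<exists>s t. p = (cis s, cis t)" by (metis prod.collapse)
qed (auto simp: torus2_def)

lemma cis_in_torus2 [simp]: "(cis s, cis t) \<in> torus2"
  using in_torus2_iff_cis by blast

lemma torus2_nonzero: "p \<in> torus2 \<Longrightarrow> fst p \<noteq> 0 \<and> snd p \<noteq> 0"
  unfolding torus2_def by (auto simp: mem_Times_iff)

lemma cis_add_int_2pi: "cis (x + of_int k * (2*pi)) = cis x"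
  by (metis cis_mult cis_multiple_2pi Ints_of_int mult.commute mult_1_right)

lemma phiA_cis:
  "phiA a b c d (cis s, cis t) = (cis (of_int a * s + of_int b * t), cis (of_int c * s + of_int d * t))"
  unfolding phiA_def by (simp add: cis_power_int cis_mult)

lemma phiA_in_torus2: "p \<in> torus2 \<Longrightarrow> phiA a b c d p \<in> torus2"
  using in_torus2_iff_cis[of p] phiA_cis by auto

lemma continuous_on_phiA: "continuous_on torus2 (phiA a b c d)"
proof -
  have "phiA a b c d = (\<lambda>p. (fst p powi a * snd p powi b, fst p powi c * snd p powi d))"
    unfolding phiA_def by (auto simp: case_prod_beta)
  then show ?thesis
    using torus2_nonzero by (auto intro!: continuous_intros)
qed

lemma phiA_phiA:
  assumes "p \<in> torus2"
  shows "phiA a b c d (phiA a' b' c' d' p) =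
    phiA (a*a' + b*c') (a*b' + b*d') (c*a' + d*c') (c*b' + d*d') p"
  using assms by (auto simp: in_torus2_iff_cis phiA_cis algebra_simps)

lemma phiA_inverse:
  assumes "p \<in> torus2" and "e * (a*d - b*c) = 1"
  shows "phiA a b c d (phiA (e*d) (-e*b) (-e*c) (e*a) p) = p"
    and "phiA (e*d) (-e*b) (-e*c) (e*a) (phiA a b c d p) = p"
proof -
  have id: "phiA 1 0 0 1 p = p"
    unfolding phiA_def by (auto simp: case_prod_beta)
  show "phiA a b c d (phiA (e*d) (-e*b) (-e*c) (e*a) p) = p"
    "phiA (e*d) (-e*b) (-e*c) (e*a) (phiA a b c d p) = p"
    using assms(2) id by (simp_all add: phiA_phiA[OF assms(1)] algebra_simps)
qed

lemma piA_CT2: "f \<in> CT2 \<Longrightarrow> piA a b c d f \<in> CT2"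
  unfolding CT2_def piA_def
  by (auto intro!: continuous_on_compose2[of torus2 f] continuous_on_phiA phiA_in_torus2)

definition fourier_integrand ::
  "(complex \<times> complex \<Rightarrow> complex) \<Rightarrow> int \<Rightarrow> int \<Rightarrow> real \<times> real \<Rightarrow> complex" where
  "fourier_integrand f m n =
     (\<lambda>p. f (cis (fst p), cis (snd p)) * cis (- (of_int m * fst p + of_int n * snd p)))"

lemma fourier2_eq_square_integral:
  "fourier2 f m n = square_integral (fourier_integrand f m n) / complex_of_real (4 * pi\<^sup>2)"
  unfolding fourier2_def square_integral_def fourier_integrand_def by (simp add: case_prod_unfold)

lemma torus_periodic_fourier_integrand:
  assumes "f \<in> CT2"
  shows "torus_periodic (fourier_integrand f m n)"
proof -
  have "continuous_on UNIV (\<lambda>p::real \<times> real. f (cis (fst p), cis (snd p)))"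
    by (rule continuous_on_compose2[of torus2 f]) (use assms in \<open>auto simp: CT2_def intro!: continuous_intros\<close>)
  then have "continuous_on UNIV (fourier_integrand f m n)"
    unfolding fourier_integrand_def by (intro continuous_intros)
  moreover have "cis (- (of_int m * (x + 2*pi) + of_int n * y)) = cis (- (of_int m * x + of_int n * y))"
    and "cis (- (of_int m * x + of_int n * (y + 2*pi))) = cis (- (of_int m * x + of_int n * y))"
    for x y
    using cis_add_int_2pi[of "- (of_int m * x + of_int n * y)" "-m"]
      cis_add_int_2pi[of "- (of_int m * x + of_int n * y)" "-n"]
    by (simp_all add: algebra_simps)
  moreover have "cis (x + 2*pi) = cis x" for x
    using cis_add_int_2pi[of x 1] by simp
  ultimately show ?thesis
    unfolding torus_periodic_def fourier_integrand_def by simp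
qed

lemma fourier2_piA:
  assumes "f \<in> CT2" and "\<bar>a*d - b*c\<bar> = 1"
  shows "fourier2 (piA a b c d f) (m*a + n*c) (m*b + n*d) = fourier2 f m n"
proof -
  have "fourier_integrand (piA a b c d f) (m*a + n*c) (m*b + n*d) =
      lin_subst a b c d (fourier_integrand f m n)"
    by (rule ext) (simp add: fourier_integrand_def lin_subst_def piA_def phiA_cis algebra_simps)
  then show ?thesis
    using square_integral_unimodular[OF torus_periodic_fourier_integrand[OF assms(1)] assms(2)]
    by (simp add: fourier2_eq_square_integral)
qed

definition torus_character :: "int \<Rightarrow> int \<Rightarrow> complex \<times> complex \<Rightarrow> complex" where
  "torus_character p q = (\<lambda>z. fst z powi p * snd z powi q)"

lemma torus_character_CT2: "torus_character p q \<in> CT2"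
  unfolding CT2_def torus_character_def using torus2_nonzero by (auto intro!: continuous_intros)

lemma integral_cis_int:
  "integral {0..2*pi} (\<lambda>s. cis (of_int k * s)) = (if k = 0 then complex_of_real (2*pi) else 0)"
proof (cases "k = 0")
  case False
  have "(\<lambda>s. cis (of_int k * s)) = (\<lambda>s. exp ((\<i> * of_int k) * complex_of_real s))"
    by (rule ext) (simp add: cis_conv_exp algebra_simps)
  then have "integral {0..2*pi} (\<lambda>s. cis (of_int k * s)) =
      (exp ((\<i> * of_int k) * complex_of_real (2*pi)) - 1) / (\<i> * of_int k)"
    using integral_exp[of "2*pi" "\<i> * of_int k"] False by simp
  also have "exp ((\<i> * of_int k) * complex_of_real (2*pi)) = 1"
    using cis_multiple_2pi[of "of_int k"] by (simp add: cis_conv_exp algebra_simps)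
  finally show ?thesis using False by simp
qed (simp add: scaleR_conv_of_real)

lemma fourier2_torus_character:
  "fourier2 (torus_character p q) m n = (if p = m \<and> q = n then 1 else 0)"
proof -
  have "fourier_integrand (torus_character p q) m n =
      (\<lambda>x. cis (of_int (p - m) * fst x) * cis (of_int (q - n) * snd x))"
    by (rule ext)
      (simp add: fourier_integrand_def torus_character_def cis_power_int cis_mult algebra_simps)
  then have "square_integral (fourier_integrand (torus_character p q) m n) =
      integral {0..2*pi} (\<lambda>x. cis (of_int (p - m) * x)) *
      integral {0..2*pi} (\<lambda>y. cis (of_int (q - n) * y))"
    by (simp only: square_integral_iterated continuous_intros fst_conv snd_conv integral_mult_left integral_mult_right)
  also have "\<dots> = (if p = m then complex_of_real (2*pi) else 0) * (if q = n then complex_of_real (2*pi) else 0)"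
    by (simp only: integral_cis_int right_minus_eq)
  finally show ?thesis
    by (simp add: fourier2_eq_square_integral power2_eq_square)
qed

lemma torus_character_in_A_alpha:
  "real_of_int p + \<alpha> * real_of_int q \<ge> 0 \<Longrightarrow> torus_character p q \<in> A_alpha \<alpha>"
  unfolding A_alpha_def using torus_character_CT2 fourier2_torus_character by auto

section \<open>Invariance of \<open>A\<^sub>\<alpha>\<close>\<close>

lemma irrational_halfplane_lattice_points:
  fixes \<alpha> \<delta> :: real and \<sigma> :: int
  assumes "\<alpha> \<notin> \<rat>" "\<delta> > 0" "\<bar>\<sigma>\<bar> = 1"
  obtains h k :: int where "0 < of_int h + \<alpha> * of_int k" "of_int h + \<alpha> * of_int k < \<delta>" "\<sigma> * k \<ge> 1"
proof -
  have "\<delta> / 2 > 0" using assms(2) by simp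
  then obtain h k where "k > 0" and close: "\<bar>of_int k * \<alpha> - of_int h - of_int \<sigma> * \<delta> / 2\<bar> < \<delta> / 2"
    using sequence_of_fractional_parts_is_dense[OF assms(1)] by blast
  have \<sigma>: "real_of_int \<sigma> = 1 \<or> real_of_int \<sigma> = -1" "\<sigma> * \<sigma> = 1"
    using assms(3) by (auto simp: abs_if split: if_splits)
  have "of_int (-\<sigma> * h) + \<alpha> * of_int (\<sigma> * k) = of_int \<sigma> * (of_int k * \<alpha> - of_int h)"
    by (simp add: algebra_simps)
  moreover have "0 < of_int \<sigma> * (of_int k * \<alpha> - of_int h)" "of_int \<sigma> * (of_int k * \<alpha> - of_int h) < \<delta>"
    using \<sigma>(1) close[unfolded abs_less_iff] by auto
  moreover have "\<sigma> * (\<sigma> * k) \<ge> 1"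
    using \<open>k > 0\<close> \<sigma>(2) by (simp add: mult.assoc[symmetric])
  ultimately show ?thesis
    using that[of "-\<sigma> * h" "\<sigma> * k"] by simp
qed

lemma nonneg_on_halfplane_lattice_imp_proportional:
  fixes \<alpha> L1 L2 :: real
  assumes "\<alpha> \<notin> \<rat>" and "L1 \<noteq> 0"
    and nonneg: "\<And>p q::int. of_int p + \<alpha> * of_int q \<ge> 0 \<Longrightarrow> of_int p * L1 + of_int q * L2 \<ge> 0"
  shows "L1 > 0 \<and> L2 = \<alpha> * L1"
proof -
  have "L1 > 0" using nonneg[of 1 0] \<open>L1 \<noteq> 0\<close> by simp
  moreover have "L2 = \<alpha> * L1"
  proof (rule ccontr)
    define c where "c = L2 - \<alpha> * L1"
    define \<sigma> :: int where "\<sigma> = (if c > 0 then -1 else 1)"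
    assume "L2 \<noteq> \<alpha> * L1"
    then have "\<bar>c\<bar> / L1 > 0" using \<open>L1 > 0\<close> by (simp add: c_def)
    moreover have "\<bar>\<sigma>\<bar> = 1" by (simp add: \<sigma>_def)
    ultimately obtain h k where hk: "0 < of_int h + \<alpha> * of_int k" "of_int h + \<alpha> * of_int k < \<bar>c\<bar> / L1"
      and "\<sigma> * k \<ge> 1"
      using irrational_halfplane_lattice_points[OF \<open>\<alpha> \<notin> \<rat>\<close>] by blast
    have "0 \<le> of_int h * L1 + of_int k * L2"
      using nonneg hk(1) by simp
    also have "\<dots> = L1 * (of_int h + \<alpha> * of_int k) + of_int k * c"
      by (simp add: c_def algebra_simps)
    also have "L1 * (of_int h + \<alpha> * of_int k) < \<bar>c\<bar>"
      using hk(2) \<open>L1 > 0\<close> by (simp add: pos_less_divide_eq mult.commute)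
    also have "of_int k * c \<le> - \<bar>c\<bar>"
    proof (cases "c > 0")
      case True
      then have "of_int k \<le> (-1::real)" using \<open>\<sigma> * k \<ge> 1\<close> by (simp add: \<sigma>_def)
      then show ?thesis using True mult_right_mono[of "of_int k" "-1" c] by simp
    next
      case False
      then have "of_int k \<ge> (1::real)" using \<open>\<sigma> * k \<ge> 1\<close> by (simp add: \<sigma>_def)
      then show ?thesis using False mult_right_mono_neg[of 1 "of_int k" c] by simp
    qed
    finally show False by simp
  qed
  ultimately show ?thesis ..
qed

definition scales_alpha_direction :: "real \<Rightarrow> int \<Rightarrow> int \<Rightarrow> int \<Rightarrow> int \<Rightarrow> bool" where
  "scales_alpha_direction \<alpha> a b c d \<longleftrightarrow>
     (\<exists>\<mu>>0. of_int a + \<alpha> * of_int b = \<mu> \<and> of_int c + \<alpha> * of_int d = \<mu> * \<alpha>)"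

lemma scales_alpha_direction_iff:
  "scales_alpha_direction \<alpha> a b c d \<longleftrightarrow>
     real_of_int a + \<alpha> * real_of_int b > 0 \<and>
     real_of_int b * \<alpha>\<^sup>2 + real_of_int (a - d) * \<alpha> - real_of_int c = 0"
  unfolding scales_alpha_direction_def by (auto simp: algebra_simps power2_eq_square)

lemma scales_alpha_direction_inverse:
  assumes "e * (a*d - b*c) = 1" and "scales_alpha_direction \<alpha> a b c d"
  shows "scales_alpha_direction \<alpha> (e*d) (-e*b) (-e*c) (e*a)"
proof -
  obtain \<mu> where "\<mu> > 0" and \<mu>: "of_int a + \<alpha> * of_int b = \<mu>" "of_int c + \<alpha> * of_int d = \<mu> * \<alpha>"
    using assms(2) unfolding scales_alpha_direction_def by blast
  have e: "real_of_int e * (of_int a * of_int d - of_int b * of_int c) = 1"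
    using arg_cong[OF assms(1), of real_of_int] by simp
  have "\<mu> * (of_int (e*d) + \<alpha> * of_int (-e*b)) = of_int e * (of_int d * \<mu> - of_int b * (\<mu> * \<alpha>))"
    by (simp add: algebra_simps)
  also have "\<dots> = 1"
    using e unfolding \<mu>(2)[symmetric] unfolding \<mu>(1)[symmetric] by (simp add: algebra_simps)
  finally have inv1: "\<mu> * (of_int (e*d) + \<alpha> * of_int (-e*b)) = 1" .
  have "\<mu> * (of_int (-e*c) + \<alpha> * of_int (e*a)) = of_int e * (of_int a * (\<mu> * \<alpha>) - of_int c * \<mu>)"
    by (simp add: algebra_simps)
  also have "\<dots> = \<alpha>"
    using e unfolding \<mu>(2)[symmetric] unfolding \<mu>(1)[symmetric] by (simp add: algebra_simps)
  finally have inv2: "\<mu> * (of_int (-e*c) + \<alpha> * of_int (e*a)) = \<alpha>" .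
  show ?thesis
    unfolding scales_alpha_direction_def using \<open>\<mu> > 0\<close> inv1 inv2
    by (intro exI[of _ "1 / \<mu>"]) (auto simp: field_simps)
qed

lemma unimodular_row_combination:
  fixes a b c d k l :: int
  assumes "\<bar>a*d - b*c\<bar> = 1"
  obtains m n where "k = m*a + n*c" "l = m*b + n*d"
proof (rule that)
  let ?D = "a*d - b*c"
  have D: "?D * ?D = 1"
    using assms abs_mult_self_eq[of ?D] by simp
  have "(?D * (d*k - c*l)) * a + (?D * (a*l - b*k)) * c = (?D * ?D) * k"
    and "(?D * (d*k - c*l)) * b + (?D * (a*l - b*k)) * d = (?D * ?D) * l"
    by (simp_all add: algebra_simps)
  with D show "k = (?D * (d*k - c*l)) * a + (?D * (a*l - b*k)) * c"
    and "l = (?D * (d*k - c*l)) * b + (?D * (a*l - b*k)) * d"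
    by simp_all
qed

lemma piA_in_A_alpha:
  assumes det: "\<bar>a*d - b*c\<bar> = 1" and "scales_alpha_direction \<alpha> a b c d" and f: "f \<in> A_alpha \<alpha>"
  shows "piA a b c d f \<in> A_alpha \<alpha>"
proof -
  obtain \<mu> where "\<mu> > 0" and \<mu>: "of_int a + \<alpha> * of_int b = \<mu>" "of_int c + \<alpha> * of_int d = \<mu> * \<alpha>"
    using assms(2) unfolding scales_alpha_direction_def by blast
  have "fourier2 (piA a b c d f) k l = 0" if "of_int k + \<alpha> * of_int l < 0" for k l
  proof -
    obtain m n where kl: "k = m*a + n*c" "l = m*b + n*d"
      using unimodular_row_combination[OF det] .
    have "of_int k + \<alpha> * of_int l =
        of_int m * (of_int a + \<alpha> * of_int b) + of_int n * (of_int c + \<alpha> * of_int d)"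
      by (simp add: kl algebra_simps)
    also have "\<dots> = \<mu> * (of_int m + \<alpha> * of_int n)"
      unfolding \<mu> by (simp add: algebra_simps)
    finally have "of_int m + \<alpha> * of_int n < 0"
      using that \<open>\<mu> > 0\<close> by (simp add: mult_less_0_iff)
    then have "fourier2 f m n = 0"
      using f unfolding A_alpha_def by blast
    then show ?thesis
      using fourier2_piA[OF _ det] f unfolding kl A_alpha_def by simp
  qed
  then show ?thesis
    using piA_CT2 f unfolding A_alpha_def by blast
qed

lemma scales_alpha_direction_if_maps_A_alpha:
  assumes irrational: "\<alpha> \<notin> \<rat>" and det: "\<bar>a*d - b*c\<bar> = 1"
    and maps: "\<forall>f\<in>A_alpha \<alpha>. piA a b c d f \<in> A_alpha \<alpha>"
  shows "scales_alpha_direction \<alpha> a b c d"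
proof -
  let ?L1 = "of_int a + \<alpha> * of_int b" and ?L2 = "of_int c + \<alpha> * of_int d"
  have "of_int p * ?L1 + of_int q * ?L2 \<ge> 0" if "of_int p + \<alpha> * of_int q \<ge> 0" for p q :: int
  proof -
    have "piA a b c d (torus_character p q) \<in> A_alpha \<alpha>"
      using maps torus_character_in_A_alpha[OF that] by blast
    moreover have "fourier2 (piA a b c d (torus_character p q)) (p*a + q*c) (p*b + q*d) = 1"
      by (simp add: fourier2_piA[OF torus_character_CT2 det] fourier2_torus_character)
    ultimately have "\<not> of_int (p*a + q*c) + \<alpha> * of_int (p*b + q*d) < 0"
      unfolding A_alpha_def by auto
    then show ?thesis by (simp add: algebra_simps)
  qed
  moreover have "?L1 \<noteq> 0"
  proof
    assume zero: "?L1 = 0"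
    have "b = 0"
    proof (rule ccontr)
      assume "b \<noteq> 0"
      then have "\<alpha> = of_int (-a) / of_int b" using zero by (simp add: field_simps)
      then show False using irrational by simp
    qed
    then show False using zero det by simp
  qed
  ultimately have "?L1 > 0 \<and> ?L2 = \<alpha> * ?L1"
    using nonneg_on_halfplane_lattice_imp_proportional[OF irrational] by blast
  then show ?thesis
    unfolding scales_alpha_direction_def by (auto simp: mult.commute)
qed

lemma phiA_image_torus2:
  assumes "e * (a*d - b*c) = 1"
  shows "phiA a b c d ` torus2 = torus2"
proof
  show "torus2 \<subseteq> phiA a b c d ` torus2"
    using phiA_inverse(1)[OF _ assms] phiA_in_torus2 by (metis image_eqI subsetI)
qed (use phiA_in_torus2 in blast)

lemma supnorm_piA:
  assumes "e * (a*d - b*c) = 1"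
  shows "supnorm (piA a b c d f) = supnorm f"
proof -
  have "(SUP p\<in>torus2. cmod (f (phiA a b c d p))) = (SUP q\<in>phiA a b c d ` torus2. cmod (f q))"
    by (simp add: image_image)
  then show ?thesis
    unfolding supnorm_def piA_def phiA_image_torus2[OF assms] by simp
qed

lemma restricts_isometric_automorphism_if_scales:
  assumes det: "\<bar>a*d - b*c\<bar> = 1" and scales: "scales_alpha_direction \<alpha> a b c d"
  shows "restricts_isometric_automorphism a b c d \<alpha>"
proof -
  define e where "e = a*d - b*c"
  have inv: "e * (a*d - b*c) = 1"
    using det abs_mult_self_eq[of e] by (simp add: e_def)
  have det_inv: "\<bar>(e*d) * (e*a) - (-e*b) * (-e*c)\<bar> = 1"
  proof -
    have "(e*d) * (e*a) - (-e*b) * (-e*c) = e * (e * (a*d - b*c))" by (simp add: algebra_simps)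
    then show ?thesis using inv det by (simp add: e_def)
  qed
  let ?pi_inv = "piA (e*d) (-e*b) (-e*c) (e*a)"
  have injective: "\<forall>p\<in>torus2. f p = g p"
    if "\<forall>p\<in>torus2. piA a b c d f p = piA a b c d g p" for f g
  proof
    fix p assume p: "p \<in> torus2"
    then have "phiA (e*d) (-e*b) (-e*c) (e*a) p \<in> torus2" by (rule phiA_in_torus2)
    with that have "piA a b c d f (phiA (e*d) (-e*b) (-e*c) (e*a) p) =
        piA a b c d g (phiA (e*d) (-e*b) (-e*c) (e*a) p)" by blast
    then show "f p = g p"
      unfolding piA_def using phiA_inverse(1)[OF p inv] by simp
  qed
  have surjective: "\<forall>p\<in>torus2. piA a b c d (?pi_inv g) p = g p" for g
    unfolding piA_def using phiA_inverse(2)[OF _ inv] by simp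
  show ?thesis
    unfolding restricts_isometric_automorphism_def
    using piA_in_A_alpha[OF det scales] supnorm_piA[OF inv] injective surjective
      piA_in_A_alpha[OF det_inv scales_alpha_direction_inverse[OF inv scales]]
    by blast
qed

theorem mainTheorem9:
  fixes \<alpha> :: real and m1 n1 m2 n2 :: int
  assumes "\<alpha> > 0" and "\<alpha> \<notin> \<rat>"
    and "m1 * n2 - n1 * m2 = 1 \<or> m1 * n2 - n1 * m2 = -1"
  shows "restricts_isometric_automorphism m1 n1 m2 n2 \<alpha> \<longleftrightarrow>
           (real_of_int m1 + \<alpha> * real_of_int n1 > 0 \<and>
            real_of_int n1 * \<alpha>\<^sup>2 + real_of_int (m1 - n2) * \<alpha> - real_of_int m2 = 0)"
proof -
  have det: "\<bar>m1 * n2 - n1 * m2\<bar> = 1"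
    using assms(3) by auto
  have "restricts_isometric_automorphism m1 n1 m2 n2 \<alpha> \<longleftrightarrow> scales_alpha_direction \<alpha> m1 n1 m2 n2"
    using scales_alpha_direction_if_maps_A_alpha[OF assms(2) det]
      restricts_isometric_automorphism_if_scales[OF det]
    unfolding restricts_isometric_automorphism_def by blast
  then show ?thesis
    by (simp add: scales_alpha_direction_iff)
qed

end
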